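(* Let $\ell\in\mathbb{R}$ and $p\in(0,1)$, and let $\tilde X$ be drawn with probability $p$ from the law of $X\sim N(0,1)$ conditioned on $X>\ell$, and with probability $1-p$ from the law of $X\sim N(0,1)$ conditioned on $X\le\ell$. Then for every $t>0$, $\Pr[|\tilde X|>t]\le2\exp(-t^2/K_1^2)$ where $K_1=\max\{\sqrt{20},|\ell|\sqrt{10}\}$. In particular, $\|\tilde X\|_{\psi_2}=O(\max\{1,|\ell|\})$.
   Context: The subgaussian norm is $\|X\|_{\psi_2}:=\inf\{t>0:\mathbb{E}[\exp(X^2/t^2)]\le2\}$. *)

theory Defs
  imports "HOL-Probability.Probability"
begin

definition std_normal_measure :: "real measure" where
  "std_normal_measure = density lborel (\<lambda>x. ennreal (std_normal_density x))"

definition trunc_mix_density :: "real \<Rightarrow> real \<Rightarrow> real \<Rightarrow> real" where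
  "trunc_mix_density l p x =
     (if l < x then p * std_normal_density x / measure std_normal_measure {l<..}
      else (1 - p) * std_normal_density x / measure std_normal_measure {..l})"

definition trunc_mix_measure :: "real \<Rightarrow> real \<Rightarrow> real measure" where
  "trunc_mix_measure l p = density lborel (\<lambda>x. ennreal (trunc_mix_density l p x))"

definition psi2_norm :: "real measure \<Rightarrow> real" where
  "psi2_norm M = Inf {t::real. t > 0 \<and> (\<integral>\<^sup>+ x. ennreal (exp (x\<^sup>2 / t\<^sup>2)) \<partial>M) \<le> 2}"

end

theory Submission
  imports Defs
begin

text \<open>Each of the half-lines \<open>{l<..}\<close> and \<open>{..l}\<close> contains an interval of length one inside
  \<open>[-|l|-1, |l|+1]\<close>, so both conditioning probabilities are at least \<open>\<phi>(|l|+1)\<close>. Hence the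
  mixture density is dominated by \<open>\<phi>(x)/\<phi>(|l|+1) = exp(((|l|+1)\<^sup>2 - x\<^sup>2)/2)\<close>, and for any
  density with such a Gaussian majorant both the tail bound and the bound \<open>14(|l|+1)\<close> on the
  \<open>\<psi>\<^sub>2\<close>-norm follow by comparison with Gaussian integrals.\<close>

lemma nn_integral_exp_neg_square:
  assumes "\<sigma> > 0"
  shows "(\<integral>\<^sup>+x. ennreal (exp (- x\<^sup>2 / (2*\<sigma>\<^sup>2))) \<partial>lborel) = ennreal (sqrt (2*pi*\<sigma>\<^sup>2))"
proof -
  have total: "(\<integral>\<^sup>+x. ennreal (normal_density 0 \<sigma> x) \<partial>lborel) = 1"
    using prob_space.emeasure_space_1[OF prob_space_normal_density[OF assms, of 0]]
    by (simp add: emeasure_density)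
  have "(\<integral>\<^sup>+x. ennreal (exp (- x\<^sup>2 / (2*\<sigma>\<^sup>2))) \<partial>lborel)
      = (\<integral>\<^sup>+x. ennreal (sqrt (2*pi*\<sigma>\<^sup>2)) * ennreal (normal_density 0 \<sigma> x) \<partial>lborel)"
    using assms by (simp add: normal_density_def ennreal_mult[symmetric])
  also have "\<dots> = ennreal (sqrt (2*pi*\<sigma>\<^sup>2))"
    by (simp add: nn_integral_cmult total)
  finally show ?thesis .
qed

lemma nn_integral_le_scaled_plus_gaussian:
  fixes g h :: "real \<Rightarrow> real"
  assumes "\<sigma> > 0" "0 \<le> \<alpha>" "0 \<le> \<beta>" "g \<in> borel_measurable borel" "\<And>x. 0 \<le> g x"
    and h_le: "\<And>x. h x \<le> \<alpha> * g x + \<beta> * exp (- x\<^sup>2 / (2*\<sigma>\<^sup>2))"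
  shows "(\<integral>\<^sup>+x. ennreal (h x) \<partial>lborel)
           \<le> ennreal \<alpha> * (\<integral>\<^sup>+x. ennreal (g x) \<partial>lborel) + ennreal (\<beta> * sqrt (2*pi*\<sigma>\<^sup>2))"
proof -
  have "(\<integral>\<^sup>+x. ennreal (h x) \<partial>lborel)
      \<le> (\<integral>\<^sup>+x. ennreal \<alpha> * ennreal (g x) + ennreal \<beta> * ennreal (exp (- x\<^sup>2 / (2*\<sigma>\<^sup>2))) \<partial>lborel)"
    using assms by (intro nn_integral_mono)
      (simp add: ennreal_mult[symmetric] ennreal_plus[symmetric] ennreal_leI del: ennreal_plus)
  also have "\<dots> = ennreal \<alpha> * (\<integral>\<^sup>+x. ennreal (g x) \<partial>lborel)
      + ennreal \<beta> * (\<integral>\<^sup>+x. ennreal (exp (- x\<^sup>2 / (2*\<sigma>\<^sup>2))) \<partial>lborel)"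
    using assms(4) by (simp add: nn_integral_add nn_integral_cmult)
  also have "\<dots> = ennreal \<alpha> * (\<integral>\<^sup>+x. ennreal (g x) \<partial>lborel) + ennreal (\<beta> * sqrt (2*pi*\<sigma>\<^sup>2))"
    using nn_integral_exp_neg_square[OF \<open>\<sigma> > 0\<close>] \<open>0 \<le> \<beta>\<close> by (simp add: ennreal_mult)
  finally show ?thesis .
qed

lemma measure_abs_greater_le_of_density_le:
  fixes g :: "real \<Rightarrow> real"
  assumes M: "prob_space (density lborel (\<lambda>x. ennreal (g x)))" "g \<in> borel_measurable borel"
    and g_nonneg: "\<And>x. 0 \<le> g x" and g_le: "\<And>x. g x \<le> exp ((D - x\<^sup>2)/2)"
    and k: "20 \<le> k" "10 * D \<le> 3 * k" and "0 \<le> t"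
  shows "measure (density lborel (\<lambda>x. ennreal (g x))) {x. \<bar>x\<bar> > t} \<le> 2 * exp (- t\<^sup>2 / k)"
proof -
  interpret prob_space "density lborel (\<lambda>x. ennreal (g x))" by (fact M)
  let ?S = "{x::real. \<bar>x\<bar> > t}"
  show ?thesis
  proof (cases "t\<^sup>2 \<le> ln 2 * k")
    case True
    then have "- ln 2 \<le> - t\<^sup>2 / k" using k by (simp add: divide_le_eq)
    then have "exp (- ln 2) \<le> exp (- t\<^sup>2 / k)" by simp
    then have "1 \<le> 2 * exp (- t\<^sup>2 / k)" by (simp add: exp_minus)
    then show ?thesis using prob_le_1 order.trans by blast
  next
    case False
    define E where "E = 9/20 * t\<^sup>2 - D/2 - t\<^sup>2/k"
    have "t\<^sup>2/k \<le> t\<^sup>2/20" using k by (intro divide_left_mono) auto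
    moreover have "2/3 * k < t\<^sup>2"
      using False mult_right_mono[OF ln2_ge_two_thirds, of k] k by linarith
    ultimately have "2 \<le> E" unfolding E_def using k by linarith
    then have "5 \<le> exp E"
      using exp_lower_Taylor_quadratic[of E] power_mono[of 2 E 2] by simp
    moreover have "sqrt (20*pi) \<le> 8" using pi_approx by (simp add: real_sqrt_le_iff')
    ultimately have "exp (- E) * sqrt (20*pi) \<le> 1/5 * 8"
      by (intro mult_mono) (auto simp: exp_minus field_simps)
    moreover have "exp (D/2 - 9/20 * t\<^sup>2) = exp (- t\<^sup>2 / k) * exp (- E)"
      by (simp add: E_def flip: exp_add)
    ultimately have bound: "exp (D/2 - 9/20 * t\<^sup>2) * sqrt (20*pi) \<le> 2 * exp (- t\<^sup>2 / k)"
      by (simp add: mult.assoc mult_left_mono)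
    \<comment> \<open>On \<open>|x| > t\<close> the decay \<open>exp (-x\<^sup>2/2)\<close> is split as \<open>exp (-9t\<^sup>2/20) * exp (-x\<^sup>2/20)\<close>.\<close>
    have tail_le: "g x * indicator ?S x
        \<le> 0 * g x + exp (D/2 - 9/20 * t\<^sup>2) * exp (- x\<^sup>2 / (2 * (sqrt 10)\<^sup>2))" for x
    proof (cases "x \<in> ?S")
      case True
      then have "t\<^sup>2 \<le> x\<^sup>2" using power_mono[of t "\<bar>x\<bar>" 2] \<open>0 \<le> t\<close> by simp
      then have "exp ((D - x\<^sup>2)/2) \<le> exp (D/2 - 9/20 * t\<^sup>2 - x\<^sup>2/20)" by simp
      then have "g x \<le> exp (D/2 - 9/20 * t\<^sup>2 - x\<^sup>2/20)" using g_le[of x] by linarith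
      then show ?thesis using True by (simp flip: exp_add)
    qed simp
    have "emeasure (density lborel (\<lambda>x. ennreal (g x))) ?S
        = (\<integral>\<^sup>+x. ennreal (g x * indicator ?S x) \<partial>lborel)"
      using M(2) by (auto simp: emeasure_density indicator_def intro!: nn_integral_cong)
    also have "\<dots> \<le> ennreal (exp (D/2 - 9/20 * t\<^sup>2) * sqrt (20*pi))"
      using nn_integral_le_scaled_plus_gaussian[OF _ _ _ M(2) g_nonneg tail_le] by simp
    also have "\<dots> \<le> ennreal (2 * exp (- t\<^sup>2 / k))"
      using bound by (rule ennreal_leI)
    finally show ?thesis by (simp add: emeasure_eq_measure)
  qed
qed

lemma psi2_norm_le:
  assumes "0 < s" "(\<integral>\<^sup>+x. ennreal (exp (x\<^sup>2 / s\<^sup>2)) \<partial>M) \<le> 2"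
  shows "psi2_norm M \<le> s"
  unfolding psi2_norm_def by (rule cInf_lower) (use assms in \<open>auto intro: bdd_belowI[of _ 0]\<close>)

lemma mult_exp_le_of_le_gaussian:
  fixes x y D :: real
  assumes "0 \<le> y" "y \<le> exp ((D - x\<^sup>2)/2)" "1 \<le> D"
  shows "y * exp (x\<^sup>2 / (196 * D)) \<le> exp (1/4) * y + exp (-11/2 * D) * exp (- x\<^sup>2 / (2 * 2\<^sup>2))"
proof (cases "x\<^sup>2 \<le> 48 * D")
  case True
  then have "x\<^sup>2 / (196 * D) \<le> 1/4" using \<open>1 \<le> D\<close> by (simp add: divide_le_eq)
  then have "y * exp (x\<^sup>2 / (196 * D)) \<le> exp (1/4) * y"
    using \<open>0 \<le> y\<close> by (simp add: mult.commute mult_left_mono)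
  moreover have "0 \<le> exp (-11/2 * D) * exp (- x\<^sup>2 / (2 * 2\<^sup>2))" by simp
  ultimately show ?thesis by linarith
next
  case False
  have "x\<^sup>2 / (196 * D) \<le> x\<^sup>2 / 196" using \<open>1 \<le> D\<close> by (intro divide_left_mono) auto
  moreover have "(D - x\<^sup>2)/2 + x\<^sup>2 / 196 \<le> -11/2 * D - x\<^sup>2 / 8"
    using False \<open>1 \<le> D\<close> by (simp add: field_simps)
  ultimately have "(D - x\<^sup>2)/2 + x\<^sup>2 / (196 * D) \<le> -11/2 * D - x\<^sup>2 / 8" by linarith
  then have "exp ((D - x\<^sup>2)/2) * exp (x\<^sup>2 / (196 * D)) \<le> exp (-11/2 * D) * exp (- x\<^sup>2 / (2 * 2\<^sup>2))"
    by (simp flip: exp_add)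
  moreover have "y * exp (x\<^sup>2 / (196 * D)) \<le> exp ((D - x\<^sup>2)/2) * exp (x\<^sup>2 / (196 * D))"
    using assms(2) by (simp add: mult_right_mono)
  moreover have "0 \<le> exp (1/4) * y" using \<open>0 \<le> y\<close> by simp
  ultimately show ?thesis by linarith
qed

lemma psi2_norm_le_of_density_le:
  fixes g :: "real \<Rightarrow> real"
  assumes M: "prob_space (density lborel (\<lambda>x. ennreal (g x)))" "g \<in> borel_measurable borel"
    and g_nonneg: "\<And>x. 0 \<le> g x" and g_le: "\<And>x. g x \<le> exp ((D - x\<^sup>2)/2)"
    and "1 \<le> D"
  shows "psi2_norm (density lborel (\<lambda>x. ennreal (g x))) \<le> 14 * sqrt D"
proof -
  define s where "s = 14 * sqrt D"
  have s2: "s\<^sup>2 = 196 * D" using \<open>1 \<le> D\<close> by (simp add: s_def power_mult_distrib)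
  have total: "(\<integral>\<^sup>+x. ennreal (g x) \<partial>lborel) = 1"
    using prob_space.emeasure_space_1[OF M(1)] M(2) by (simp add: emeasure_density)
  have pointwise: "g x * exp (x\<^sup>2 / s\<^sup>2)
      \<le> exp (1/4) * g x + exp (-11/2 * D) * exp (- x\<^sup>2 / (2 * 2\<^sup>2))" for x
    unfolding s2 using g_nonneg g_le \<open>1 \<le> D\<close> by (rule mult_exp_le_of_le_gaussian)
  have "exp (-11/2 * D) \<le> exp (-11/2)" using \<open>1 \<le> D\<close> by simp
  also have "\<dots> \<le> 1/18"
    using exp_lower_Taylor_quadratic[of "11/2"] by (simp add: exp_minus field_simps power2_eq_square)
  finally have "exp (-11/2 * D) * sqrt (2 * pi * 2\<^sup>2) \<le> 1/18 * 6"
    using pi_approx by (intro mult_mono) (auto simp: real_sqrt_le_iff')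
  moreover have "exp (1/4::real) \<le> 4/3"
    using exp_ge_add_one_self[of "-1/4::real"] by (simp add: exp_minus field_simps)
  ultimately have constants: "exp (1/4) + exp (-11/2 * D) * sqrt (2 * pi * 2\<^sup>2) \<le> 2" by linarith
  have "(\<integral>\<^sup>+x. ennreal (exp (x\<^sup>2 / s\<^sup>2)) \<partial>density lborel (\<lambda>x. ennreal (g x)))
      = (\<integral>\<^sup>+x. ennreal (g x * exp (x\<^sup>2 / s\<^sup>2)) \<partial>lborel)"
    using M(2) g_nonneg by (simp add: nn_integral_density ennreal_mult)
  also have "\<dots> \<le> ennreal (exp (1/4)) * 1 + ennreal (exp (-11/2 * D) * sqrt (2 * pi * 2\<^sup>2))"
    using nn_integral_le_scaled_plus_gaussian[OF _ _ _ M(2) g_nonneg pointwise] total by simp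
  also have "\<dots> \<le> 2"
    using ennreal_leI[OF constants] by (simp flip: ennreal_plus del: ennreal_plus)
  finally show ?thesis
    unfolding s_def[symmetric] using \<open>1 \<le> D\<close> by (intro psi2_norm_le) (auto simp: s_def)
qed

lemma prob_space_std_normal_measure: "prob_space std_normal_measure"
  unfolding std_normal_measure_def by (rule prob_space_normal_density) simp

lemma nn_integral_std_normal_density_indicator:
  assumes "A \<in> sets borel"
  shows "(\<integral>\<^sup>+x. ennreal (std_normal_density x) * indicator A x \<partial>lborel)
           = ennreal (measure std_normal_measure A)"
proof -
  interpret prob_space std_normal_measure by (rule prob_space_std_normal_measure)
  have "(\<integral>\<^sup>+x. ennreal (std_normal_density x) * indicator A x \<partial>lborel) = emeasure std_normal_measure A"
    using assms by (simp add: std_normal_measure_def emeasure_density)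
  then show ?thesis by (simp add: emeasure_eq_measure)
qed

lemma std_normal_density_le_measure:
  assumes "{c<..c+1} \<subseteq> A" "A \<in> sets borel" "\<And>x. x \<in> {c<..c+1} \<Longrightarrow> \<bar>x\<bar> \<le> b"
  shows "std_normal_density b \<le> measure std_normal_measure A"
proof -
  have density_mono: "std_normal_density b \<le> std_normal_density x" if "x \<in> {c<..c+1}" for x
  proof -
    have "x\<^sup>2 \<le> b\<^sup>2" using assms(3)[OF that] by (metis abs_le_square_iff abs_of_nonneg abs_ge_zero order.trans)
    then show ?thesis unfolding std_normal_density_def by (intro mult_left_mono) simp_all
  qed
  have "ennreal (std_normal_density b) = (\<integral>\<^sup>+x. ennreal (std_normal_density b) * indicator {c<..c+1} x \<partial>lborel)"
    by (simp add: nn_integral_cmult_indicator)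
  also have "\<dots> \<le> (\<integral>\<^sup>+x. ennreal (std_normal_density x) * indicator A x \<partial>lborel)"
    using assms(1) density_mono
    by (intro nn_integral_mono) (auto simp: indicator_def ennreal_leI)
  also have "\<dots> = ennreal (measure std_normal_measure A)"
    using assms(2) by (rule nn_integral_std_normal_density_indicator)
  finally show ?thesis by simp
qed

lemma std_normal_density_le_measure_greaterThan:
  "std_normal_density (\<bar>l\<bar>+1) \<le> measure std_normal_measure {l<..}"
  by (rule std_normal_density_le_measure[where c="max l 0"]) auto

lemma std_normal_density_le_measure_atMost:
  "std_normal_density (\<bar>l\<bar>+1) \<le> measure std_normal_measure {..l}"
  by (rule std_normal_density_le_measure[where c="min l 0 - 1"]) auto

lemma borel_measurable_trunc_mix_density [measurable]:
  "trunc_mix_density l p \<in> borel_measurable borel"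
  unfolding trunc_mix_density_def by measurable

lemma trunc_mix_density_nonneg: "0 \<le> p \<Longrightarrow> p \<le> 1 \<Longrightarrow> 0 \<le> trunc_mix_density l p x"
  unfolding trunc_mix_density_def by simp

lemma trunc_mix_density_le:
  assumes "0 \<le> p" "p \<le> 1"
  shows "trunc_mix_density l p x \<le> exp (((\<bar>l\<bar>+1)\<^sup>2 - x\<^sup>2)/2)"
proof -
  define b where "b = \<bar>l\<bar>+1"
  have b_pos: "0 < std_normal_density b" by (simp add: std_normal_density_def)
  have "c * std_normal_density x / Z \<le> std_normal_density x / std_normal_density b"
    if "0 \<le> c" "c \<le> 1" "std_normal_density b \<le> Z" for c Z
  proof -
    have "c * std_normal_density x / Z \<le> std_normal_density x / Z"
      using that b_pos by (simp add: divide_right_mono mult_left_le_one_le)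
    also have "\<dots> \<le> std_normal_density x / std_normal_density b"
      using that b_pos by (intro divide_left_mono) auto
    finally show ?thesis .
  qed
  then have "trunc_mix_density l p x \<le> std_normal_density x / std_normal_density b"
    using assms std_normal_density_le_measure_greaterThan[of l] std_normal_density_le_measure_atMost[of l]
    unfolding trunc_mix_density_def b_def by auto
  also have "\<dots> = exp ((b\<^sup>2 - x\<^sup>2)/2)"
    by (simp add: std_normal_density_def exp_diff[symmetric] diff_divide_distrib)
  finally show ?thesis unfolding b_def .
qed

lemma nn_integral_trunc_mix_density:
  assumes "0 \<le> p" "p \<le> 1"
  shows "(\<integral>\<^sup>+x. ennreal (trunc_mix_density l p x) \<partial>lborel) = 1"
proof -
  define Q where "Q = measure std_normal_measure {l<..}"
  define P where "P = measure std_normal_measure {..l}"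
  have "0 < std_normal_density (\<bar>l\<bar>+1)" by (simp add: std_normal_density_def)
  then have QP_pos: "0 < Q" "0 < P"
    using std_normal_density_le_measure_greaterThan[of l] std_normal_density_le_measure_atMost[of l]
    unfolding Q_def P_def by linarith+
  have "ennreal (trunc_mix_density l p x) =
     ennreal (p/Q) * (ennreal (std_normal_density x) * indicator {l<..} x)
     + ennreal ((1-p)/P) * (ennreal (std_normal_density x) * indicator {..l} x)" for x
    using assms QP_pos
    by (cases "l < x") (auto simp: trunc_mix_density_def Q_def P_def ennreal_mult[symmetric] mult.commute)
  then have "(\<integral>\<^sup>+x. ennreal (trunc_mix_density l p x) \<partial>lborel)
      = ennreal (p/Q) * ennreal Q + ennreal ((1-p)/P) * ennreal P"
    by (simp add: nn_integral_add nn_integral_cmult nn_integral_std_normal_density_indicator Q_def P_def)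
  also have "\<dots> = 1"
    using assms QP_pos by (simp add: ennreal_mult[symmetric] ennreal_plus[symmetric] del: ennreal_plus)
  finally show ?thesis .
qed

lemma prob_space_trunc_mix_measure:
  assumes "0 \<le> p" "p \<le> 1"
  shows "prob_space (trunc_mix_measure l p)"
  by (rule prob_spaceI)
    (simp add: trunc_mix_measure_def emeasure_density nn_integral_trunc_mix_density[OF assms])

lemma trunc_mix_measure_tail_le:
  assumes "0 \<le> p" "p \<le> 1" "0 \<le> t"
  shows "measure (trunc_mix_measure l p) {x. \<bar>x\<bar> > t}
           \<le> 2 * exp (- t\<^sup>2 / (max (sqrt 20) (\<bar>l\<bar> * sqrt 10))\<^sup>2)"
  unfolding trunc_mix_measure_def
proof (rule measure_abs_greater_le_of_density_le)
  show "prob_space (density lborel (\<lambda>x. ennreal (trunc_mix_density l p x)))"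
    using prob_space_trunc_mix_measure[OF assms(1,2)] by (simp add: trunc_mix_measure_def)
  show "trunc_mix_density l p x \<le> exp (((\<bar>l\<bar> + 1)\<^sup>2 - x\<^sup>2)/2)" for x
    using assms(1,2) by (rule trunc_mix_density_le)
  let ?K = "max (sqrt 20) (\<bar>l\<bar> * sqrt 10)"
  have "(sqrt 20)\<^sup>2 \<le> ?K\<^sup>2" "(\<bar>l\<bar> * sqrt 10)\<^sup>2 \<le> ?K\<^sup>2" by (intro power_mono; simp)+
  then have "20 \<le> ?K\<^sup>2" "10 * l\<^sup>2 \<le> ?K\<^sup>2" by (simp_all add: power_mult_distrib)
  moreover have "(\<bar>l\<bar> + 1)\<^sup>2 + (\<bar>l\<bar> - 1)\<^sup>2 = 2 * l\<^sup>2 + 2"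
    by (simp add: power2_eq_square algebra_simps)
  moreover have "0 \<le> (\<bar>l\<bar> - 1)\<^sup>2" by simp
  ultimately show "20 \<le> ?K\<^sup>2" "10 * (\<bar>l\<bar> + 1)\<^sup>2 \<le> 3 * ?K\<^sup>2" by linarith+
qed (use assms trunc_mix_density_nonneg in auto)

lemma psi2_norm_trunc_mix_measure_le:
  assumes "0 \<le> p" "p \<le> 1"
  shows "psi2_norm (trunc_mix_measure l p) \<le> 14 * (\<bar>l\<bar> + 1)"
proof -
  have "psi2_norm (trunc_mix_measure l p) \<le> 14 * sqrt ((\<bar>l\<bar> + 1)\<^sup>2)"
    unfolding trunc_mix_measure_def
  proof (rule psi2_norm_le_of_density_le)
    show "prob_space (density lborel (\<lambda>x. ennreal (trunc_mix_density l p x)))"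
      using prob_space_trunc_mix_measure[OF assms] by (simp add: trunc_mix_measure_def)
    show "trunc_mix_density l p x \<le> exp (((\<bar>l\<bar> + 1)\<^sup>2 - x\<^sup>2)/2)" for x
      using assms by (rule trunc_mix_density_le)
    show "1 \<le> (\<bar>l\<bar> + 1)\<^sup>2" by (simp add: one_le_power)
  qed (use assms trunc_mix_density_nonneg in auto)
  then show ?thesis by simp
qed

theorem lemma18:
  shows "(\<forall>(l::real) (p::real) (t::real). 0 < p \<and> p < 1 \<and> t > 0 \<longrightarrow>
            measure (trunc_mix_measure l p) {x. \<bar>x\<bar> > t}
              \<le> 2 * exp (- t\<^sup>2 / (max (sqrt 20) (\<bar>l\<bar> * sqrt 10))\<^sup>2))
       \<and> (\<exists>C::real. \<forall>(l::real) (p::real). 0 < p \<and> p < 1 \<longrightarrow>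
            psi2_norm (trunc_mix_measure l p) \<le> C * max 1 \<bar>l\<bar>)"
proof (intro conjI exI[of _ 28] allI impI)
  fix l p t :: real
  assume "0 < p \<and> p < 1 \<and> t > 0"
  then show "measure (trunc_mix_measure l p) {x. \<bar>x\<bar> > t}
               \<le> 2 * exp (- t\<^sup>2 / (max (sqrt 20) (\<bar>l\<bar> * sqrt 10))\<^sup>2)"
    by (intro trunc_mix_measure_tail_le) auto
next
  fix l p :: real
  assume "0 < p \<and> p < 1"
  then have "psi2_norm (trunc_mix_measure l p) \<le> 14 * (\<bar>l\<bar> + 1)"
    by (intro psi2_norm_trunc_mix_measure_le) auto
  also have "\<dots> \<le> 28 * max 1 \<bar>l\<bar>" by (simp add: max_def)
  finally show "psi2_norm (trunc_mix_measure l p) \<le> 28 * max 1 \<bar>l\<bar>" .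
qed

end
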